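(* Let $\mathfrak{M}=(S,\mathcal{L})$ be a Veblenian gamma space all of whose lines have at least $4$ points, and let $\mathcal{H}$ be a hyperplane of $\mathfrak{M}$. A set $X\subseteq S$ is a strong subspace of the complement $\mathfrak{M}\setminus\mathcal{H}$ if and only if there is a strong subspace $Y$ of $\mathfrak{M}$ such that $X=Y\setminus\mathcal{H}$.
   Context: A partial linear space is a pair $(S,\mathcal{L})$ of points and lines ($\mathcal{L}$ a family of subsets of $S$) such that every line has at least two points, every point is on a line, and two distinct lines share at most one point; points are collinear ($a\sim b$) if some line contains both, and two lines are adjacent if they share a point. A subspace is a set $X$ such that every line meeting $X$ in at least two points lies in $X$; it is strong if any two of its points are collinear. A hyperplane is a proper subspace meeting every line. A gamma space is a partial linear space in which, for every point $a$, the set of points collinear with $a$ is a subspace. It is Veblenian if for any two distinct lines $L_1,L_2$ through a point $p$ and any two distinct lines $K_1,K_2$ not through $p$ such that each $K_j$ meets both $L_1$ and $L_2$, the lines $K_1,K_2$ meet. For a hyperplane $\mathcal{H}$, every line $L\not\subseteq\mathcal{H}$ meets $\mathcal{H}$ in a unique point $L^\infty$. The complement $\mathfrak{M}\setminus\mathcal{H}$ is the structure with point set $S\setminus\mathcal{H}$, lines $L\setminus\mathcal{H}$ for $L\in\mathcal{L}$ with $L\not\subseteq\mathcal{H}$, and parallelism $\parallel_{\mathcal{H}}$ given by $L\parallel_\mathcal{H}K$ iff $L^\infty=K^\infty$; subspaces and strong subspaces of the complement are taken with respect to its points and lines. *)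

theory Defs
  imports Main
begin

definition partial_linear_space :: "'a set \<Rightarrow> 'a set set \<Rightarrow> bool" where
  "partial_linear_space S L \<longleftrightarrow>
     (\<forall>l\<in>L. l \<subseteq> S \<and> (\<exists>a b. a \<noteq> b \<and> a \<in> l \<and> b \<in> l)) \<and>
     (\<forall>p\<in>S. \<exists>l\<in>L. p \<in> l) \<and>
     (\<forall>l\<in>L. \<forall>k\<in>L. l \<noteq> k \<longrightarrow> (\<forall>a b. a \<in> l \<and> a \<in> k \<and> b \<in> l \<and> b \<in> k \<longrightarrow> a = b))"

definition collinear :: "'a set set \<Rightarrow> 'a \<Rightarrow> 'a \<Rightarrow> bool" where
  "collinear L a b \<longleftrightarrow> (\<exists>l\<in>L. a \<in> l \<and> b \<in> l)"

definition subspace :: "'a set \<Rightarrow> 'a set set \<Rightarrow> 'a set \<Rightarrow> bool" where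
  "subspace S L X \<longleftrightarrow> X \<subseteq> S \<and>
     (\<forall>l\<in>L. (\<exists>a b. a \<noteq> b \<and> a \<in> l \<and> a \<in> X \<and> b \<in> l \<and> b \<in> X) \<longrightarrow> l \<subseteq> X)"

definition strong_subspace :: "'a set \<Rightarrow> 'a set set \<Rightarrow> 'a set \<Rightarrow> bool" where
  "strong_subspace S L X \<longleftrightarrow> subspace S L X \<and> (\<forall>a\<in>X. \<forall>b\<in>X. collinear L a b)"

definition hyperplane :: "'a set \<Rightarrow> 'a set set \<Rightarrow> 'a set \<Rightarrow> bool" where
  "hyperplane S L H \<longleftrightarrow> subspace S L H \<and> H \<noteq> S \<and> (\<forall>l\<in>L. l \<inter> H \<noteq> {})"

definition gamma_space :: "'a set \<Rightarrow> 'a set set \<Rightarrow> bool" where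
  "gamma_space S L \<longleftrightarrow> partial_linear_space S L \<and>
     (\<forall>a\<in>S. subspace S L {b \<in> S. collinear L a b})"

definition veblenian :: "'a set \<Rightarrow> 'a set set \<Rightarrow> bool" where
  "veblenian S L \<longleftrightarrow>
     (\<forall>p L1 L2 K1 K2. L1 \<in> L \<and> L2 \<in> L \<and> K1 \<in> L \<and> K2 \<in> L \<and>
        L1 \<noteq> L2 \<and> p \<in> L1 \<and> p \<in> L2 \<and> K1 \<noteq> K2 \<and> p \<notin> K1 \<and> p \<notin> K2 \<and>
        K1 \<inter> L1 \<noteq> {} \<and> K1 \<inter> L2 \<noteq> {} \<and> K2 \<inter> L1 \<noteq> {} \<and> K2 \<inter> L2 \<noteq> {}
        \<longrightarrow> K1 \<inter> K2 \<noteq> {})"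

definition lines_min4 :: "'a set set \<Rightarrow> bool" where
  "lines_min4 L \<longleftrightarrow> (\<forall>l\<in>L. \<exists>a b c d. distinct [a, b, c, d] \<and> {a, b, c, d} \<subseteq> l)"

text \<open>Complement of a hyperplane: points S - H, lines l - H for lines l not contained in H.
  (The parallelism of the complement plays no role for (strong) subspaces.)\<close>

definition compl_points :: "'a set \<Rightarrow> 'a set \<Rightarrow> 'a set" where
  "compl_points S H = S - H"

definition compl_lines :: "'a set set \<Rightarrow> 'a set \<Rightarrow> 'a set set" where
  "compl_lines L H = {l - H | l. l \<in> L \<and> \<not> l \<subseteq> H}"

definition point_at_infinity :: "'a set \<Rightarrow> 'a set \<Rightarrow> 'a" where
  "point_at_infinity H l = (THE p. p \<in> l \<and> p \<in> H)"

end

theory Submission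
  imports Defs
begin

text \<open>A strong subspace X of the complement is the affine part of its secant closure Y,
  obtained by adding every line of the ambient space that joins two points of X; the points
  added off X are points at infinity of lines of X. That Y is a subspace rests on Veblen's
  axiom: a line joining a point of X to a point at infinity of a line of X has its whole
  affine part in X, and a line of H joining two such points at infinity is covered by lines
  through two points of X. Collinearity within Y follows from the gamma property.\<close>

lemma partial_linear_space_line_subset:
  "partial_linear_space S L \<Longrightarrow> l \<in> L \<Longrightarrow> l \<subseteq> S"
  unfolding partial_linear_space_def by (elim conjE) blast

lemma partial_linear_space_line_unique:
  assumes "partial_linear_space S L" "l \<in> L" "k \<in> L" "a \<noteq> b" "a \<in> l" "b \<in> l" "a \<in> k" "b \<in> k"
  shows "l = k"
proof -
  have "\<forall>l\<in>L. \<forall>k\<in>L. l \<noteq> k \<longrightarrow> (\<forall>a b. a \<in> l \<and> a \<in> k \<and> b \<in> l \<and> b \<in> k \<longrightarrow> a = b)"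
    using assms(1) unfolding partial_linear_space_def by (elim conjE)
  with assms(2-) show ?thesis by blast
qed

lemma collinear_sym: "collinear L a b \<Longrightarrow> collinear L b a"
  unfolding collinear_def by blast

lemma subspace_line_subset:
  "subspace S L X \<Longrightarrow> l \<in> L \<Longrightarrow> a \<noteq> b \<Longrightarrow> a \<in> l \<Longrightarrow> b \<in> l \<Longrightarrow>
    a \<in> X \<Longrightarrow> b \<in> X \<Longrightarrow> l \<subseteq> X"
  unfolding subspace_def by blast

lemma subspace_line_meets_once:
  assumes "subspace S L H" "l \<in> L" "\<not> l \<subseteq> H" "a \<in> l \<inter> H" "b \<in> l \<inter> H"
  shows "a = b"
  using assms unfolding subspace_def by blast

lemma lines_min4_three_points_off_subspace:
  assumes "lines_min4 L" "subspace S L H" "l \<in> L" "\<not> l \<subseteq> H"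
  shows "\<exists>a b c. distinct [a, b, c] \<and> {a, b, c} \<subseteq> l - H"
proof -
  obtain a b c d where abcd: "distinct [a, b, c, d]" "{a, b, c, d} \<subseteq> l"
    using assms(1,3) unfolding lines_min4_def by blast
  have off_H: "x \<notin> H \<or> y \<notin> H" if "x \<in> l" "y \<in> l" "x \<noteq> y" for x y
    using subspace_line_meets_once[OF assms(2-4)] that by blast
  consider "a \<in> H" | "b \<in> H" | "c \<in> H" | "a \<notin> H" "b \<notin> H" "c \<notin> H" by blast
  then show ?thesis
  proof cases
    case 1
    with off_H[of a b] off_H[of a c] off_H[of a d] abcd
    have "distinct [b, c, d] \<and> {b, c, d} \<subseteq> l - H" by auto
    then show ?thesis by blast
  next
    case 2
    with off_H[of b a] off_H[of b c] off_H[of b d] abcd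
    have "distinct [a, c, d] \<and> {a, c, d} \<subseteq> l - H" by auto
    then show ?thesis by blast
  next
    case 3
    with off_H[of c a] off_H[of c b] off_H[of c d] abcd
    have "distinct [a, b, d] \<and> {a, b, d} \<subseteq> l - H" by auto
    then show ?thesis by blast
  next
    case 4
    with abcd have "distinct [a, b, c] \<and> {a, b, c} \<subseteq> l - H" by auto
    then show ?thesis by blast
  qed
qed

lemma gamma_space_collinear_line:
  assumes "gamma_space S L" "x \<in> S" "l \<in> L" "a \<noteq> b" "a \<in> l" "b \<in> l"
    and "collinear L x a" "collinear L x b" "y \<in> l"
  shows "collinear L x y"
proof -
  have "a \<in> S" "b \<in> S"
    using assms(1,3,5,6) partial_linear_space_line_subset unfolding gamma_space_def by blast+
  moreover have "subspace S L {z \<in> S. collinear L x z}"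
    using assms(1,2) unfolding gamma_space_def by blast
  ultimately show ?thesis
    using assms(3-) unfolding subspace_def by blast
qed

lemma veblenianD:
  assumes "veblenian S L" "L1 \<in> L" "L2 \<in> L" "K1 \<in> L" "K2 \<in> L" "L1 \<noteq> L2" "p \<in> L1" "p \<in> L2"
    and "K1 \<noteq> K2" "p \<notin> K1" "p \<notin> K2"
    and "x1 \<in> K1 \<inter> L1" "x2 \<in> K1 \<inter> L2" "y1 \<in> K2 \<inter> L1" "y2 \<in> K2 \<inter> L2"
  obtains z where "z \<in> K1" "z \<in> K2"
proof -
  have "K1 \<inter> L1 \<noteq> {}" "K1 \<inter> L2 \<noteq> {}" "K2 \<inter> L1 \<noteq> {}" "K2 \<inter> L2 \<noteq> {}"
    using assms(12-15) by blast+
  with assms(2-11) have "K1 \<inter> K2 \<noteq> {}"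
    using assms(1)[unfolded veblenian_def, rule_format, of L1 L2 K1 K2 p] by simp
  then show thesis using that by blast
qed

lemma collinear_compl_lines_iff:
  assumes "a \<notin> H" "b \<notin> H"
  shows "collinear (compl_lines L H) a b \<longleftrightarrow> collinear L a b"
  using assms unfolding collinear_def compl_lines_def by blast

lemma subspace_compl_iff:
  "subspace (compl_points S H) (compl_lines L H) X \<longleftrightarrow>
     X \<subseteq> S - H \<and>
     (\<forall>l\<in>L. \<forall>a b. a \<noteq> b \<and> a \<in> l \<and> b \<in> l \<and> a \<in> X \<and> b \<in> X \<longrightarrow> l - H \<subseteq> X)"
  (is "?compl \<longleftrightarrow> ?ambient")
proof
  assume ?compl
  then have X: "X \<subseteq> S - H"
    and closed: "\<And>l'. l' \<in> compl_lines L H \<Longrightarrow>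
      (\<exists>a b. a \<noteq> b \<and> a \<in> l' \<and> a \<in> X \<and> b \<in> l' \<and> b \<in> X) \<Longrightarrow> l' \<subseteq> X"
    unfolding subspace_def compl_points_def by blast+
  have "l - H \<subseteq> X" if "l \<in> L" "a \<noteq> b" "a \<in> l" "b \<in> l" "a \<in> X" "b \<in> X" for l a b
  proof (rule closed)
    show "l - H \<in> compl_lines L H" using that X unfolding compl_lines_def by blast
    show "\<exists>a b. a \<noteq> b \<and> a \<in> l - H \<and> a \<in> X \<and> b \<in> l - H \<and> b \<in> X" using that X by blast
  qed
  with X show ?ambient by blast
next
  assume ?ambient
  then show ?compl
    unfolding subspace_def compl_points_def compl_lines_def by blast
qed

lemma strong_subspace_compl_iff:
  "strong_subspace (compl_points S H) (compl_lines L H) X \<longleftrightarrow>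
     X \<subseteq> S - H \<and>
     (\<forall>l\<in>L. \<forall>a b. a \<noteq> b \<and> a \<in> l \<and> b \<in> l \<and> a \<in> X \<and> b \<in> X \<longrightarrow> l - H \<subseteq> X) \<and>
     (\<forall>a\<in>X. \<forall>b\<in>X. collinear L a b)"
proof (cases "X \<subseteq> S - H")
  case True
  then have "(\<forall>a\<in>X. \<forall>b\<in>X. collinear (compl_lines L H) a b) \<longleftrightarrow> (\<forall>a\<in>X. \<forall>b\<in>X. collinear L a b)"
    using collinear_compl_lines_iff[where H = H and L = L] by blast
  then show ?thesis unfolding strong_subspace_def subspace_compl_iff by simp
next
  case False
  then show ?thesis unfolding strong_subspace_def subspace_compl_iff by simp
qed

lemma strong_subspace_diff_compl:
  assumes "strong_subspace S L Y"
  shows "strong_subspace (compl_points S H) (compl_lines L H) (Y - H)"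
  unfolding strong_subspace_compl_iff
  using assms unfolding strong_subspace_def subspace_def by blast

definition secant_closure :: "'a set set \<Rightarrow> 'a set \<Rightarrow> 'a set" where
  "secant_closure L X = X \<union> \<Union>{l \<in> L. \<exists>a b. a \<noteq> b \<and> a \<in> l \<and> b \<in> l \<and> a \<in> X \<and> b \<in> X}"

lemma secant_subset_closure:
  "l \<in> L \<Longrightarrow> a \<noteq> b \<Longrightarrow> a \<in> l \<Longrightarrow> b \<in> l \<Longrightarrow> a \<in> X \<Longrightarrow> b \<in> X \<Longrightarrow>
    l \<subseteq> secant_closure L X"
  unfolding secant_closure_def by blast

locale strong_subspace_of_complement =
  fixes S :: "'a set" and L :: "'a set set" and H X :: "'a set"
  assumes gamma: "gamma_space S L"
    and veblen: "veblenian S L"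
    and min4: "lines_min4 L"
    and H_subspace: "subspace S L H"
    and X_strong: "strong_subspace (compl_points S H) (compl_lines L H) X"
begin

lemma partial_linear_space: "partial_linear_space S L"
  using gamma unfolding gamma_space_def by blast

lemmas line_subset = partial_linear_space_line_subset[OF partial_linear_space]
lemmas line_unique = partial_linear_space_line_unique[OF partial_linear_space]
lemmas line_meets_H_once = subspace_line_meets_once[OF H_subspace]
lemmas line_subset_H = subspace_line_subset[OF H_subspace]
lemmas three_points_off_H = lines_min4_three_points_off_subspace[OF min4 H_subspace]
lemmas collinear_line = gamma_space_collinear_line[OF gamma]

lemmas X_compl_conditions = X_strong[unfolded strong_subspace_compl_iff]

lemma X_subset: "X \<subseteq> S - H"
  using X_compl_conditions by (rule conjunct1)

lemma X_line_closed:
  "l \<in> L \<Longrightarrow> a \<noteq> b \<Longrightarrow> a \<in> l \<Longrightarrow> b \<in> l \<Longrightarrow> a \<in> X \<Longrightarrow> b \<in> X \<Longrightarrow> l - H \<subseteq> X"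
  using X_compl_conditions by blast

lemma X_collinear: "a \<in> X \<Longrightarrow> b \<in> X \<Longrightarrow> collinear L a b"
  using X_compl_conditions by blast

lemma secant_closure_cases:
  assumes "y \<in> secant_closure L X"
  obtains (member) "y \<in> X"
    | (ideal) l a b where "y \<in> H" "l \<in> L" "a \<noteq> b" "a \<in> l" "b \<in> l" "a \<in> X" "b \<in> X" "y \<in> l"
  using assms X_line_closed unfolding secant_closure_def by blast

lemma secant_closure_subset: "secant_closure L X \<subseteq> S"
  using X_subset line_subset unfolding secant_closure_def by blast

lemma secant_closure_diff_H: "secant_closure L X - H = X"
proof
  show "secant_closure L X - H \<subseteq> X"
    by (blast elim: secant_closure_cases)
  show "X \<subseteq> secant_closure L X - H"
    using X_subset unfolding secant_closure_def by blast
qed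

lemma line_subset_closure_if_affine_part:
  assumes "m \<in> L" "\<not> m \<subseteq> H" "m - H \<subseteq> X"
  shows "m \<subseteq> secant_closure L X"
proof -
  obtain a b c where "distinct [a, b, c]" "{a, b, c} \<subseteq> m - H"
    using three_points_off_H assms(1,2) by blast
  with assms show ?thesis
    using secant_subset_closure[of m L a b] by auto
qed

lemma collinear_X_closure:
  assumes x: "x \<in> X" and y: "y \<in> secant_closure L X"
  shows "collinear L x y"
  using y
proof (cases rule: secant_closure_cases)
  case member
  with x show ?thesis by (rule X_collinear)
next
  case (ideal l a b)
  with x X_subset show ?thesis
    using collinear_line[of x l a b y] X_collinear by blast
qed

text \<open>Veblen's axiom with centre v, applied to the lines l and m through v: the line K
  joining u to a and the line K' joining w to b meet. A common point off H would lie in X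
  (on K) and then put w into X (on K').\<close>

lemma veblen_meet_in_H:
  assumes u: "u \<in> X" and l: "l \<in> L" "l - H \<subseteq> X" "v \<in> l" "v \<in> H" "u \<notin> l"
    and m: "m \<in> L" "u \<in> m" "v \<in> m" "w \<in> m" "w \<notin> X" "w \<notin> H"
    and K: "K \<in> L" "u \<in> K" "a \<in> K" "a \<in> l" "a \<notin> H"
    and b: "b \<in> l" "b \<notin> H" "b \<noteq> a"
  obtains K' z where "K' \<in> L" "w \<in> K'" "b \<in> K'" "z \<in> K" "z \<in> K'" "z \<in> H"
proof -
  have "u \<noteq> v" "u \<noteq> w" "u \<noteq> a" "a \<noteq> v" "w \<noteq> v" "l \<noteq> m"
    using u X_subset l m K by blast+
  have "b \<in> S" using l(1) b(1) line_subset by blast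
  moreover have "collinear L b u" using X_collinear l(2) b u by blast
  moreover have "collinear L b v" using l b unfolding collinear_def by blast
  ultimately have "collinear L b w"
    using collinear_line[of b m u v w] m \<open>u \<noteq> v\<close> by blast
  then obtain K' where K': "K' \<in> L" "w \<in> K'" "b \<in> K'" unfolding collinear_def by blast
  have "K \<noteq> K'"
  proof
    assume "K = K'"
    then have "K = m" using line_unique[of K m u w] K K' m \<open>u \<noteq> w\<close> by blast
    then show False using line_unique[of l m a v] l m K \<open>a \<noteq> v\<close> \<open>l \<noteq> m\<close> by blast
  qed
  have "v \<notin> K" using line_unique[of K l a v] K l \<open>a \<noteq> v\<close> by blast
  have "v \<notin> K'"
  proof
    assume "v \<in> K'"
    then have "K' = l" using line_unique[of K' l b v] K' l b by blast
    then show False using line_unique[of l m w v] l m K' \<open>w \<noteq> v\<close> \<open>l \<noteq> m\<close> by blast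
  qed
  obtain z where z: "z \<in> K" "z \<in> K'"
    using veblenianD[OF veblen l(1) m(1) K(1) K'(1) \<open>l \<noteq> m\<close> l(3) m(3) \<open>K \<noteq> K'\<close> \<open>v \<notin> K\<close> \<open>v \<notin> K'\<close>,
        of a u b w] K K' l b m by blast
  have "z \<in> H"
  proof (rule ccontr)
    assume "z \<notin> H"
    moreover have "K - H \<subseteq> X" using X_line_closed[of K u a] K u \<open>u \<noteq> a\<close> l(2) by blast
    ultimately have "z \<in> X" using z by blast
    have "z \<noteq> b" using line_unique[of K l a b] K l b z \<open>K \<noteq> K'\<close> by blast
    then have "K' - H \<subseteq> X" using X_line_closed[of K' z b] K' z \<open>z \<in> X\<close> l(2) b by blast
    then show False using K' m by blast
  qed
  with K' z that show thesis by blast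
qed

lemma join_to_point_at_infinity_in_X:
  assumes u: "u \<in> X" "u \<notin> l" and l: "l \<in> L" "l - H \<subseteq> X" "\<not> l \<subseteq> H" "v \<in> l" "v \<in> H"
    and m: "m \<in> L" "u \<in> m" "v \<in> m" and w: "w \<in> m" "w \<notin> H"
  shows "w \<in> X"
proof (rule ccontr)
  assume "w \<notin> X"
  obtain a b c where abc: "distinct [a, b, c]" "{a, b, c} \<subseteq> l - H"
    using three_points_off_H l(1,3) by blast
  have "collinear L u a" using X_collinear u l(2) abc by blast
  then obtain K where K: "K \<in> L" "u \<in> K" "a \<in> K" unfolding collinear_def by blast
  obtain K1 z1 where K1: "K1 \<in> L" "w \<in> K1" "b \<in> K1" "z1 \<in> K" "z1 \<in> K1" "z1 \<in> H"
    by (rule veblen_meet_in_H[OF u(1) l(1,2,4,5) u(2) m, of w K a b])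
      (use w \<open>w \<notin> X\<close> K abc in auto)
  obtain K2 z2 where K2: "K2 \<in> L" "w \<in> K2" "c \<in> K2" "z2 \<in> K" "z2 \<in> K2" "z2 \<in> H"
    by (rule veblen_meet_in_H[OF u(1) l(1,2,4,5) u(2) m, of w K a c])
      (use w \<open>w \<notin> X\<close> K abc in auto)
  txt \<open>Both lines through w meet K in its unique point at infinity, so they coincide with each
    other and hence with l.\<close>
  have "z1 = z2" using line_meets_H_once[of K z1 z2] K K1 K2 u X_subset by blast
  then have "K1 = K2" using line_unique[of K1 K2 w z1] K1 K2 w by blast
  then have "K1 = l" using line_unique[of K1 l b c] K1 K2 abc l(1) by auto
  then have "m = l" using line_unique[of m l w v] m w K1 l by blast
  then show False using u m by blast
qed

lemma line_through_X_and_closure: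
  assumes u: "u \<in> X" and v: "v \<in> secant_closure L X" "u \<noteq> v"
    and m: "m \<in> L" "u \<in> m" "v \<in> m"
  shows "m - H \<subseteq> X"
  using v(1)
proof (cases rule: secant_closure_cases)
  case member
  then show ?thesis using X_line_closed m u v(2) by blast
next
  case (ideal l a b)
  have lX: "l - H \<subseteq> X" and "\<not> l \<subseteq> H" using X_line_closed X_subset ideal by blast+
  show ?thesis
  proof (cases "u \<in> l")
    case True
    then have "m = l" using line_unique[of m l u v] m ideal v(2) by blast
    with lX show ?thesis by blast
  next
    case False
    with u ideal lX \<open>\<not> l \<subseteq> H\<close> m show ?thesis
      using join_to_point_at_infinity_in_X[of u l v m] by blast
  qed
qed

text \<open>Veblen's axiom with centre u, applied to l and m: the line k joining a to v has its
  affine part in X, and the line n joining b to t meets it off H, hence in X.\<close>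

lemma point_at_infinity_in_closure:
  assumes m: "m \<in> L" "m \<subseteq> H" "u \<in> m" "v \<in> m" "u \<noteq> v" "t \<in> m" "t \<noteq> u" "t \<noteq> v"
    and l: "l \<in> L" "a \<noteq> b" "a \<in> l" "b \<in> l" "a \<in> X" "b \<in> X" "u \<in> l"
    and v: "v \<in> secant_closure L X"
  shows "t \<in> secant_closure L X"
proof -
  have "a \<notin> H" "b \<notin> H" "l \<noteq> m" using l X_subset m by blast+
  have "collinear L a v" using collinear_X_closure l v by blast
  then obtain k where k: "k \<in> L" "a \<in> k" "v \<in> k" unfolding collinear_def by blast
  have kX: "k - H \<subseteq> X" using line_through_X_and_closure[of a v k] l v k m \<open>a \<notin> H\<close> by blast
  have "b \<in> S" using l line_subset by blast
  moreover have "collinear L b u" using l unfolding collinear_def by blast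
  moreover have "collinear L b v" using collinear_X_closure l v by blast
  ultimately have "collinear L b t" using collinear_line[of b m u v t] m by blast
  then obtain n where n: "n \<in> L" "b \<in> n" "t \<in> n" unfolding collinear_def by blast
  have "b \<notin> k"
  proof
    assume "b \<in> k"
    then have "k = l" using line_unique[of k l a b] k l by blast
    then show False using line_subset_H[of l u v] l k m \<open>a \<notin> H\<close> by blast
  qed
  have "u \<notin> k" using line_subset_H[of k u v] k m \<open>a \<notin> H\<close> by blast
  have "u \<notin> n" using line_subset_H[of n t u] n m \<open>b \<notin> H\<close> by blast
  have "k \<noteq> n" using \<open>b \<notin> k\<close> n by blast
  obtain z where z: "z \<in> k" "z \<in> n"
    using veblenianD[OF veblen l(1) m(1) k(1) n(1) \<open>l \<noteq> m\<close> l(7) m(3) \<open>k \<noteq> n\<close> \<open>u \<notin> k\<close> \<open>u \<notin> n\<close>,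
        of a v b t] l k n m by blast
  have "z \<notin> H"
  proof
    assume "z \<in> H"
    then have "z = v" "z = t"
      using line_meets_H_once[of k z v] line_meets_H_once[of n z t] k n z m \<open>a \<notin> H\<close> \<open>b \<notin> H\<close>
      by blast+
    with m(8) show False by blast
  qed
  then have "z \<in> X" using kX z by blast
  moreover have "z \<noteq> b" using z \<open>b \<notin> k\<close> by blast
  ultimately show ?thesis using secant_subset_closure[of n L z b] n z l by blast
qed

lemma line_in_H_through_closure:
  assumes m: "m \<in> L" "u \<in> m" "v \<in> m" "u \<noteq> v"
    and u: "u \<in> secant_closure L X" "u \<in> H" and v: "v \<in> secant_closure L X" "v \<in> H"
  shows "m \<subseteq> secant_closure L X"
proof
  fix t assume t: "t \<in> m"
  show "t \<in> secant_closure L X"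
  proof (cases "t = u \<or> t = v")
    case True
    with u v show ?thesis by blast
  next
    case False
    have "m \<subseteq> H" using line_subset_H m u v by blast
    obtain l a b where "l \<in> L" "a \<noteq> b" "a \<in> l" "b \<in> l" "a \<in> X" "b \<in> X" "u \<in> l"
      using u X_subset by (elim secant_closure_cases) blast+
    with m \<open>m \<subseteq> H\<close> t False v show ?thesis
      using point_at_infinity_in_closure[of m u v t l a b] by blast
  qed
qed

lemma secant_closure_subspace: "subspace S L (secant_closure L X)"
  unfolding subspace_def
proof (intro conjI ballI impI)
  show "secant_closure L X \<subseteq> S" by (rule secant_closure_subset)
next
  fix m assume m: "m \<in> L"
    and "\<exists>u v. u \<noteq> v \<and> u \<in> m \<and> u \<in> secant_closure L X \<and> v \<in> m \<and> v \<in> secant_closure L X"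
  then obtain u v where uv: "u \<noteq> v" "u \<in> m" "v \<in> m" "u \<in> secant_closure L X" "v \<in> secant_closure L X"
    by blast
  have affine: "m \<subseteq> secant_closure L X"
    if "x \<in> X" "y \<in> secant_closure L X" "x \<noteq> y" "x \<in> m" "y \<in> m" for x y
    using line_subset_closure_if_affine_part[OF m] line_through_X_and_closure[OF that(1-3) m that(4,5)]
      that(1,4) X_subset by blast
  show "m \<subseteq> secant_closure L X"
  proof (cases "u \<in> X \<or> v \<in> X")
    case True
    with affine uv show ?thesis by blast
  next
    case False
    with uv secant_closure_diff_H have "u \<in> H" "v \<in> H" by blast+
    with line_in_H_through_closure m uv show ?thesis by blast
  qed
qed

lemma secant_closure_collinear:
  assumes y: "y1 \<in> secant_closure L X" "y2 \<in> secant_closure L X"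
  shows "collinear L y1 y2"
  using y(1)
proof (cases rule: secant_closure_cases)
  case member
  from member y(2) show ?thesis by (rule collinear_X_closure)
next
  case (ideal l a b)
  have "collinear L y2 a" "collinear L y2 b"
    using collinear_X_closure[OF _ y(2), THEN collinear_sym] ideal by blast+
  moreover have "y2 \<in> S" using y(2) secant_closure_subset by blast
  ultimately have "collinear L y2 y1"
    using collinear_line[of y2 l a b y1] ideal by blast
  then show ?thesis by (rule collinear_sym)
qed

lemma secant_closure_strong_subspace: "strong_subspace S L (secant_closure L X)"
  unfolding strong_subspace_def
  using secant_closure_subspace secant_closure_collinear by blast

end

theorem lemma2p4:
  fixes S :: "'a set" and L :: "'a set set" and H X :: "'a set"
  assumes "gamma_space S L"
    and "veblenian S L"
    and "lines_min4 L"
    and "hyperplane S L H"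
    and "X \<subseteq> S"
  shows "strong_subspace (compl_points S H) (compl_lines L H) X \<longleftrightarrow>
         (\<exists>Y. strong_subspace S L Y \<and> X = Y - H)"
proof
  assume X: "strong_subspace (compl_points S H) (compl_lines L H) X"
  have "subspace S L H" using assms(4) unfolding hyperplane_def by blast
  then interpret strong_subspace_of_complement S L H X
    by (rule strong_subspace_of_complement.intro[OF assms(1-3) _ X])
  show "\<exists>Y. strong_subspace S L Y \<and> X = Y - H"
    using secant_closure_strong_subspace secant_closure_diff_H by blast
next
  assume "\<exists>Y. strong_subspace S L Y \<and> X = Y - H"
  then show "strong_subspace (compl_points S H) (compl_lines L H) X"
    using strong_subspace_diff_compl by blast
qed

end
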